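(* Let $x \in \mathcal{X}_f$ be arbitrary and $\mathcal{A}(x)$ the corresponding active set. Assume the matrix $G^{\mathcal{A}}$ has full row rank and let $(G^{\mathcal{A}})^{\prime}=\begin{bmatrix} E & J \end{bmatrix} \begin{bmatrix} F \\ 0\end{bmatrix}$ be a QR factorization of $(G^{\mathcal{A}})^{\prime}$. Let $K_{\epsilon}=E \Theta S^{\mathcal{A}}- J \Psi J^{\prime} \hat{H} E \Theta S^{\mathcal{A}}$, $b_{\epsilon}=(E-J \Psi J^{\prime} \hat{H} E) \Theta W^{\mathcal{A}} - J \Psi J^{\prime} c$, $K_{\lambda}=-\Theta^{\prime} E^{\prime} (\hat{H} K_{\epsilon})$, $b_{\lambda}=-\Theta^{\prime} E^{\prime} (\hat{H} b_{\epsilon}+c)$, where $\Psi=(J^{\prime}\hat{H}J)^{-1}$ and $\Theta=(G^{\mathcal{A}}E)^{-1}$ exist by construction. Then $\epsilon^\star(x)=K_{\epsilon}x+b_{\epsilon}$ is the affine optimizer and $\lambda^{\star \mathcal{A}}(x)=K_{\lambda}x+b_{\lambda}$ are the corresponding affine active Lagrange multipliers on the polytope $\mathcal{P}=\{x \in \mathbb{R}^n \mid Tx \leq d\}$ with $T=\begin{pmatrix} G^{\mathcal{I}} K_\epsilon-S^{\mathcal{I}} \\ -K_{\lambda}\end{pmatrix}$ and $d=\begin{pmatrix} W^{\mathcal{I}} -G^{\mathcal{I}} b_{\epsilon} \\ b_{\lambda}\end{pmatrix}$.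
   Context: Consider the linear system $x(k+1)=Ax(k)+Bu(k)+Dw(k)$ with $x\in\mathbb{R}^n$, $u\in\mathbb{R}^m$, $w\in\mathbb{R}^s$, compact polyhedral constraints $x\in\mathcal{X}$, $u\in\mathcal{U}$, $w\in\mathcal{D}$ containing the origin in their interior, and input $u(k)=-K_\infty x(k)+v(k)$ with LQR gain $K_\infty$ and correction input $v$. A min-max MPC problem over horizon $N$ (worst case over disturbance sequences) is reformulated as the QP $\min_{Z,\gamma} \frac12 Z'HZ+\gamma$ s.t. $G_{\mathrm m}Z+g_{\mathrm m}\gamma\le W_{\mathrm m}+S_{\mathrm m}x$, $G_{\mathrm c}Z\le W_{\mathrm c}+S_{\mathrm c}x$, with $H\succ 0$, $Z\in\mathbb{R}^{mN}$, $\gamma\in\mathbb{R}$, $Z=V+H^{-1}L'x$ where $V$ is the correction input sequence; this QP has a unique optimizer. With $\epsilon=[Z',\gamma]'$ it is written as $\min_\epsilon \frac12\epsilon'\hat H\epsilon+c'\epsilon$ s.t. $G\epsilon\le W+Sx$, where $\hat H=\begin{pmatrix}H&0\\0&0\end{pmatrix}$ (singular), $c'=(0,\dots,0,1)$, $G\in\mathbb{R}^{(l+r)\times(mN+1)}$, $W\in\mathbb{R}^{l+r}$, $S\in\mathbb{R}^{(l+r)\times n}$. $\mathcal{X}_f$ is the set of states for which the problem is feasible; $\epsilon^\star(x)$, $\lambda^\star(x)$ are the optimizer and Lagrange multipliers. Active set $\mathcal{A}(x)=\{i \mid G^i\epsilon^\star(x)-W^i-S^ix=0\}$, inactive set $\mathcal{I}(x)=\{i\mid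 G^i\epsilon^\star(x)-W^i-S^ix<0\}$. For a matrix $M$, $M^{\mathcal{L}}$ denotes the submatrix of rows indexed by $\mathcal{L}$. *)

theory Defs
  imports "Jordan_Normal_Form.DL_Rank_Submatrix" "Jordan_Normal_Form.Gauss_Jordan_Elimination"
begin

definition posdef_mat :: "real mat \<Rightarrow> bool" where
  "posdef_mat M \<longleftrightarrow> M \<in> carrier_mat (dim_row M) (dim_row M) \<and> transpose_mat M = M \<and>
     (\<forall>v \<in> carrier_vec (dim_row M). v \<noteq> 0\<^sub>v (dim_row M) \<longrightarrow> v \<bullet> (M *\<^sub>v v) > 0)"

definition row_sub :: "'a mat \<Rightarrow> nat set \<Rightarrow> 'a mat" where
  "row_sub M L = submatrix M L UNIV"

definition vec_sub :: "'a vec \<Rightarrow> nat set \<Rightarrow> 'a vec" where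
  "vec_sub v L = vec (card {i. i < dim_vec v \<and> i \<in> L}) (\<lambda>i. v $ pick L i)"

definition append_cols :: "'a :: zero mat \<Rightarrow> 'a mat \<Rightarrow> 'a mat" where
  "append_cols E J = four_block_mat E J (0\<^sub>m 0 (dim_col E)) (0\<^sub>m 0 (dim_col J))"

definition qp_feasible :: "real mat \<Rightarrow> real vec \<Rightarrow> real mat \<Rightarrow> real vec \<Rightarrow> real vec \<Rightarrow> bool" where
  "qp_feasible G W S x eps \<longleftrightarrow> eps \<in> carrier_vec (dim_col G) \<and> G *\<^sub>v eps \<le> W + S *\<^sub>v x"

definition qp_cost :: "real mat \<Rightarrow> real vec \<Rightarrow> real vec \<Rightarrow> real" where
  "qp_cost Hh c eps = 1/2 * (eps \<bullet> (Hh *\<^sub>v eps)) + c \<bullet> eps"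

definition qp_optimizer ::
  "real mat \<Rightarrow> real vec \<Rightarrow> real mat \<Rightarrow> real vec \<Rightarrow> real mat \<Rightarrow> real vec \<Rightarrow> real vec \<Rightarrow> bool" where
  "qp_optimizer Hh c G W S x eps \<longleftrightarrow> qp_feasible G W S x eps \<and>
     (\<forall>eps'. qp_feasible G W S x eps' \<longrightarrow> qp_cost Hh c eps \<le> qp_cost Hh c eps')"

definition feasible_states :: "real mat \<Rightarrow> real vec \<Rightarrow> real mat \<Rightarrow> real vec set" where
  "feasible_states G W S = {x \<in> carrier_vec (dim_col S). \<exists>eps. qp_feasible G W S x eps}"

definition eps_star ::
  "real mat \<Rightarrow> real vec \<Rightarrow> real mat \<Rightarrow> real vec \<Rightarrow> real mat \<Rightarrow> real vec \<Rightarrow> real vec" where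
  "eps_star Hh c G W S x = (THE eps. qp_optimizer Hh c G W S x eps)"

definition active_set :: "real mat \<Rightarrow> real vec \<Rightarrow> real mat \<Rightarrow> real vec \<Rightarrow> real vec \<Rightarrow> nat set" where
  "active_set G W S x eps = {i. i < dim_row G \<and> row G i \<bullet> eps - W $ i - row S i \<bullet> x = 0}"

definition inactive_set :: "real mat \<Rightarrow> real vec \<Rightarrow> real mat \<Rightarrow> real vec \<Rightarrow> real vec \<Rightarrow> nat set" where
  "inactive_set G W S x eps = {i. i < dim_row G \<and> row G i \<bullet> eps - W $ i - row S i \<bullet> x < 0}"

definition lagrange_multipliers ::
  "real mat \<Rightarrow> real vec \<Rightarrow> real mat \<Rightarrow> real vec \<Rightarrow> real mat \<Rightarrow> real vec \<Rightarrow> real vec \<Rightarrow> real vec \<Rightarrow> bool" where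
  "lagrange_multipliers Hh c G W S x eps lam \<longleftrightarrow>
     lam \<in> carrier_vec (dim_row G) \<and> lam \<ge> 0\<^sub>v (dim_row G) \<and>
     Hh *\<^sub>v eps + c + transpose_mat G *\<^sub>v lam = 0\<^sub>v (dim_col G) \<and>
     (\<forall>i < dim_row G. lam $ i * (row G i \<bullet> eps - W $ i - row S i \<bullet> x) = 0)"

end

theory Submission
  imports Defs
begin

text \<open>
  On the critical region the active set is frozen, so the min-max QP reduces to the
  equality-constrained QP of its active constraints.  With the QR factorization
  G_A' = E F, a point satisfies the active constraints iff it has the form
  E Theta (S_A x + W_A) - J z, where Theta = (G_A E)^-1 = (F')^-1, and minimising over z gives
  the null-space step z = Psi J' (Hh E Theta (S_A x + W_A) + c) with Psi = (J' Hh J)^-1.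
  The multipliers come from projecting stationarity onto the range of E.  Both laws are affine
  in x and satisfy the active constraints and stationarity identically; T x <= d says exactly
  that the inactive constraints hold and the active multipliers are nonnegative.  So the KKT
  conditions hold, which for a convex QP means optimality, and uniqueness identifies the affine
  law with eps*(x).

  The only non-routine point is the invertibility of J' Hh J, as Hh = diag(H, 0) is singular
  in the epigraph variable gamma.  At an optimizer some active constraint involves gamma
  (otherwise decreasing gamma keeps feasibility and lowers the cost), and that row makes Hh
  definite on the null space of G_A.
\<close>

lemma assoc_mult_mat_vec_dim:
  "dim_col A = dim_row B \<Longrightarrow> dim_col B = dim_vec v \<Longrightarrow> (A * B) *\<^sub>v v = A *\<^sub>v (B *\<^sub>v v)"
  by (rule assoc_mult_mat_vec[of A "dim_row A" "dim_col A" B "dim_col B" v]) (auto intro: carrier_vecI)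

lemma add_mult_distrib_mat_vec_dim:
  "dim_row A = dim_row B \<Longrightarrow> dim_col A = dim_col B \<Longrightarrow> dim_col A = dim_vec v \<Longrightarrow>
   ((A :: 'a :: semiring_0 mat) + B) *\<^sub>v v = A *\<^sub>v v + B *\<^sub>v v"
  by (rule add_mult_distrib_mat_vec[of A "dim_row A" "dim_col A"]) (auto intro: carrier_vecI)

lemma minus_mult_distrib_mat_vec_dim:
  "dim_row A = dim_row B \<Longrightarrow> dim_col A = dim_col B \<Longrightarrow> dim_col A = dim_vec v \<Longrightarrow>
   ((A :: 'a :: ring mat) - B) *\<^sub>v v = A *\<^sub>v v - B *\<^sub>v v"
  by (rule minus_mult_distrib_mat_vec[of A "dim_row A" "dim_col A"]) (auto intro: carrier_vecI)

lemma mult_add_distrib_mat_vec_dim: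
  "dim_vec v = dim_vec w \<Longrightarrow> dim_col A = dim_vec v \<Longrightarrow>
   (A :: 'a :: semiring_0 mat) *\<^sub>v (v + w) = A *\<^sub>v v + A *\<^sub>v w"
  by (rule mult_add_distrib_mat_vec[of A "dim_row A" "dim_col A"]) (auto intro: carrier_vecI)

lemma mult_minus_distrib_mat_vec_dim:
  "dim_vec v = dim_vec w \<Longrightarrow> dim_col A = dim_vec v \<Longrightarrow>
   (A :: 'a :: ring mat) *\<^sub>v (v - w) = A *\<^sub>v v - A *\<^sub>v w"
  by (rule mult_minus_distrib_mat_vec[of A "dim_row A" "dim_col A"]) (auto intro: carrier_vecI)

lemma mult_mat_vec_uminus_dim:
  "dim_col A = dim_vec v \<Longrightarrow> (A :: 'a :: ring mat) *\<^sub>v (- v) = - (A *\<^sub>v v)"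
  by (intro eq_vecI) (auto simp: scalar_prod_def sum_negf)

lemma zero_mat_mult_vec [simp]: "dim_vec v = nc \<Longrightarrow> 0\<^sub>m nr nc *\<^sub>v v = (0\<^sub>v nr :: 'a :: semiring_0 vec)"
  by (intro eq_vecI) (auto simp: scalar_prod_def)

lemma mult_mat_vec_zero [simp]: "dim_col A = n \<Longrightarrow> (A :: 'a :: semiring_0 mat) *\<^sub>v 0\<^sub>v n = 0\<^sub>v (dim_row A)"
  by (intro eq_vecI) (auto simp: scalar_prod_def)

lemmas mult_mat_vec_dim_simps = assoc_mult_mat_vec_dim add_mult_distrib_mat_vec_dim
  minus_mult_distrib_mat_vec_dim mult_add_distrib_mat_vec_dim mult_minus_distrib_mat_vec_dim
  uminus_mult_mat_vec mult_mat_vec_uminus_dim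

lemma scalar_prod_symmetric_mat:
  fixes M :: "'a :: comm_ring mat"
  assumes M: "M \<in> carrier_mat p p" and sym: "transpose_mat M = M"
    and u: "u \<in> carrier_vec p" and v: "v \<in> carrier_vec p"
  shows "u \<bullet> (M *\<^sub>v v) = v \<bullet> (M *\<^sub>v u)"
proof -
  have "u \<bullet> (M *\<^sub>v v) = (transpose_mat M *\<^sub>v u) \<bullet> v"
    using transpose_vec_mult_scalar[OF M v u] by simp
  also have "\<dots> = v \<bullet> (M *\<^sub>v u)" unfolding sym using M u v by (simp add: comm_scalar_prod[of _ p])
  finally show ?thesis .
qed

lemma (in vec_space) rank_mult_le:
  assumes A: "A \<in> carrier_mat n k" and B: "B \<in> carrier_mat k m"
  shows "rank (A * B) \<le> rank A"
proof -
  define U where "U = span (set (cols A))"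
  have AB: "A * B \<in> carrier_mat n m" using A B by simp
  have cA: "set (cols A) \<subseteq> carrier_vec n" and cAB: "set (cols (A * B)) \<subseteq> carrier_vec n"
    using A AB cols_dim by blast+
  have "set (cols (A * B)) \<subseteq> U"
  proof
    fix x assume "x \<in> set (cols (A * B))"
    then obtain i where i: "i < m" "x = col (A * B) i" using AB unfolding in_set_conv_nth by auto
    then have "x = A *\<^sub>v col B i" by (simp only: col_mult2[OF A B i(1)])
    then show "x \<in> U" unfolding U_def using col_space_eq[OF A] A B i
      unfolding col_space_def by auto
  qed
  then have "span (set (cols (A * B))) \<subseteq> U"
    unfolding U_def by (rule span_is_subset[OF _ span_is_submodule[OF cA]])
  moreover have U: "VectorSpace.subspace class_ring U V"
    unfolding U_def by (rule span_is_subspace[OF cA])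
  ultimately have "VectorSpace.subspace class_ring (span (set (cols (A * B)))) (vs U)"
    using nested_subspaces[OF U span_is_subspace[OF cAB]] by blast
  moreover have "vectorspace.fin_dim class_ring (vs U)" using U_def A fin_dim_span_cols by blast
  ultimately show ?thesis unfolding rank_def U_def[symmetric]
    using vectorspace.subspace_dim[OF subspace_is_vs[OF U]] fin_dim_span_cols[OF AB] by simp
qed

lemma (in vec_space) det_nonzero_if_full_rank_mult:
  assumes A: "A \<in> carrier_mat n n" and B: "B \<in> carrier_mat n k" and rk: "rank (A * B) = n"
  shows "det A \<noteq> 0"
  using rank_mult_le[OF A B] rank_le_nc[OF A] rk det_rank_iff[OF A] by simp

lemma mat_inverse_if_det_nonzero:
  fixes M :: "'a :: field mat"
  assumes M: "M \<in> carrier_mat k k" and det: "det M \<noteq> 0"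
  shows "M * the (mat_inverse M) = 1\<^sub>m k" "the (mat_inverse M) * M = 1\<^sub>m k"
    "the (mat_inverse M) \<in> carrier_mat k k" "invertible_mat M"
proof -
  have "M \<in> Units (ring_mat TYPE('a) k ())" by (rule det_non_zero_imp_unit[OF M det])
  then obtain B where B: "mat_inverse M = Some B" using mat_inverse(1)[OF M] by fastforce
  from mat_inverse(2)[OF M B]
  show "M * the (mat_inverse M) = 1\<^sub>m k" "the (mat_inverse M) * M = 1\<^sub>m k"
    "the (mat_inverse M) \<in> carrier_mat k k" using B by auto
  then show "invertible_mat M" using M
    unfolding invertible_mat_def inverts_mat_def by auto
qed

section \<open>Orthonormal completions and the QR factorization\<close>

lemma four_block_mat_empty_blocks:
  "A \<in> carrier_mat nr nc \<Longrightarrow> B \<in> carrier_mat nr 0 \<Longrightarrow> C \<in> carrier_mat 0 nc \<Longrightarrow>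
   D \<in> carrier_mat 0 0 \<Longrightarrow> four_block_mat A B C D = A"
  by (intro eq_matI) auto

lemma four_block_mat_eqD:
  assumes eq: "four_block_mat A B C D = four_block_mat A' B' C' D'"
    and "A \<in> carrier_mat nr1 nc1" "B \<in> carrier_mat nr1 nc2"
    and "C \<in> carrier_mat nr2 nc1" "D \<in> carrier_mat nr2 nc2"
    and "A' \<in> carrier_mat nr1 nc1" "B' \<in> carrier_mat nr1 nc2"
    and "C' \<in> carrier_mat nr2 nc1" "D' \<in> carrier_mat nr2 nc2"
  shows "A = A'" "B = B'" "C = C'" "D = D'"
proof -
  have entry: "four_block_mat A B C D $$ (i, j) = four_block_mat A' B' C' D' $$ (i, j)" for i j
    using eq by simp
  note dims = assms(2-9)[THEN carrier_matD(1)] assms(2-9)[THEN carrier_matD(2)]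
  show "A = A'"
  proof (rule eq_matI)
    fix i j assume "i < dim_row A'" "j < dim_col A'"
    then show "A $$ (i, j) = A' $$ (i, j)" using entry[of i j] dims by simp
  qed (use assms in auto)
  show "B = B'"
  proof (rule eq_matI)
    fix i j assume "i < dim_row B'" "j < dim_col B'"
    then show "B $$ (i, j) = B' $$ (i, j)" using entry[of i "j + nc1"] dims by simp
  qed (use assms in auto)
  show "C = C'"
  proof (rule eq_matI)
    fix i j assume "i < dim_row C'" "j < dim_col C'"
    then show "C $$ (i, j) = C' $$ (i, j)" using entry[of "i + nr1" j] dims by simp
  qed (use assms in auto)
  show "D = D'"
  proof (rule eq_matI)
    fix i j assume "i < dim_row D'" "j < dim_col D'"
    then show "D $$ (i, j) = D' $$ (i, j)" using entry[of "i + nr1" "j + nc1"] dims by simp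
  qed (use assms in auto)
qed

lemma append_cols_mult_append_rows:
  assumes E: "E \<in> carrier_mat p a" and J: "J \<in> carrier_mat p b"
    and F: "F \<in> carrier_mat a k" and Z: "Z \<in> carrier_mat b k"
  shows "append_cols E J * (F @\<^sub>r Z) = E * F + J * Z"
proof -
  have EJ: "append_cols E J = four_block_mat E J (0\<^sub>m 0 a) (0\<^sub>m 0 b)"
    using E J by (simp add: append_cols_def)
  have FZ: "F @\<^sub>r Z = four_block_mat F (0\<^sub>m a 0) Z (0\<^sub>m b 0)"
    using F Z by (simp add: append_rows_def)
  have "append_cols E J * (F @\<^sub>r Z) = four_block_mat (E * F + J * Z)
      (E * 0\<^sub>m a 0 + J * 0\<^sub>m b 0) (0\<^sub>m 0 a * F + 0\<^sub>m 0 b * Z) (0\<^sub>m 0 a * 0\<^sub>m a 0 + 0\<^sub>m 0 b * 0\<^sub>m b 0)"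
    unfolding EJ FZ by (rule mult_four_block_mat[OF E J _ _ F _ Z]) auto
  also have "\<dots> = E * F + J * Z" using E J F Z by (intro four_block_mat_empty_blocks) auto
  finally show ?thesis .
qed

lemma orthonormal_append_cols:
  fixes E J :: "'a :: field mat"
  assumes E: "E \<in> carrier_mat p a" and J: "J \<in> carrier_mat p b"
    and orth: "transpose_mat (append_cols E J) * append_cols E J = 1\<^sub>m p"
  shows "a + b = p" "transpose_mat E * E = 1\<^sub>m a" "transpose_mat J * J = 1\<^sub>m b"
    "transpose_mat E * J = 0\<^sub>m a b" "E * transpose_mat E + J * transpose_mat J = 1\<^sub>m p"
proof -
  let ?M = "append_cols E J"
  have EJ: "?M = four_block_mat E J (0\<^sub>m 0 a) (0\<^sub>m 0 b)"
    using E J by (simp add: append_cols_def)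
  have M: "?M \<in> carrier_mat p (a + b)" using E J unfolding EJ carrier_mat_def by simp
  have Mt: "transpose_mat ?M = four_block_mat (transpose_mat E) (0\<^sub>m a 0) (transpose_mat J) (0\<^sub>m b 0)"
    unfolding EJ using transpose_four_block_mat[OF E J zero_carrier_mat zero_carrier_mat] by simp
  show ab: "a + b = p" using arg_cong[OF orth, of dim_col] M by simp
  have "transpose_mat ?M * ?M = four_block_mat (transpose_mat E * E) (transpose_mat E * J)
      (transpose_mat J * E) (transpose_mat J * J)"
    unfolding Mt unfolding EJ using E J by (subst mult_four_block_mat[of _ a p _ 0 _ b]) auto
  note blocks =
    four_block_mat_eqD[OF orth[unfolded this ab[symmetric] four_block_one_mat[symmetric]], of a a b b]
  show "transpose_mat E * E = 1\<^sub>m a" "transpose_mat J * J = 1\<^sub>m b" "transpose_mat E * J = 0\<^sub>m a b"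
    using blocks E J by auto
  have "?M * transpose_mat ?M = 1\<^sub>m p"
    using mat_mult_left_right_inverse[OF _ _ orth] M ab by auto
  moreover have "?M * transpose_mat ?M = E * transpose_mat E + J * transpose_mat J"
    unfolding Mt unfolding EJ using E J
    by (subst mult_four_block_mat[of _ p a _ b _ 0]) (auto intro: four_block_mat_empty_blocks)
  ultimately show "E * transpose_mat E + J * transpose_mat J = 1\<^sub>m p" by simp
qed

lemma qr_factor_identities:
  fixes E J F GA :: "real mat"
  assumes E: "E \<in> carrier_mat p a" and J: "J \<in> carrier_mat p (p - a)" and F: "F \<in> carrier_mat a a"
    and orth: "transpose_mat (append_cols E J) * append_cols E J = 1\<^sub>m p"
    and QR: "transpose_mat GA = append_cols E J * (F @\<^sub>r 0\<^sub>m (p - a) a)"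
  shows "transpose_mat J * J = 1\<^sub>m (p - a)" "E * transpose_mat E + J * transpose_mat J = 1\<^sub>m p"
    "transpose_mat GA = E * F" "GA = transpose_mat F * transpose_mat E"
    "GA * E = transpose_mat F" "GA * J = 0\<^sub>m a (p - a)"
proof -
  note blocks = orthonormal_append_cols[OF E J orth]
  show "transpose_mat J * J = 1\<^sub>m (p - a)" "E * transpose_mat E + J * transpose_mat J = 1\<^sub>m p"
    using blocks by simp_all
  show GAt: "transpose_mat GA = E * F"
    unfolding QR append_cols_mult_append_rows[OF E J F zero_carrier_mat] using E J F by simp
  show GA: "GA = transpose_mat F * transpose_mat E"
    using arg_cong[OF GAt, of transpose_mat] transpose_mult[OF E F] by simp
  have Ft: "transpose_mat F \<in> carrier_mat a a" and Et: "transpose_mat E \<in> carrier_mat a p"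
    using E F by auto
  show "GA * E = transpose_mat F"
    unfolding GA assoc_mult_mat[OF Ft Et E] blocks(2) using Ft by simp
  show "GA * J = 0\<^sub>m a (p - a)"
    unfolding GA assoc_mult_mat[OF Ft Et J] blocks(4) using Ft by simp
qed

lemma qr_theta_identities:
  fixes E J F GA :: "real mat"
  assumes E: "E \<in> carrier_mat p a" and J: "J \<in> carrier_mat p (p - a)" and F: "F \<in> carrier_mat a a"
    and orth: "transpose_mat (append_cols E J) * append_cols E J = 1\<^sub>m p"
    and QR: "transpose_mat GA = append_cols E J * (F @\<^sub>r 0\<^sub>m (p - a) a)"
    and rank: "vec_space.rank a GA = a"
  defines "Theta \<equiv> the (mat_inverse (GA * E))"
  shows "invertible_mat (GA * E)" "Theta \<in> carrier_mat a a" "GA * E * Theta = 1\<^sub>m a"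
    "F * transpose_mat Theta = 1\<^sub>m a"
proof -
  note qr = qr_factor_identities[OF E J F orth QR]
  have Ft: "transpose_mat F \<in> carrier_mat a a" using F by simp
  have "det (transpose_mat F) \<noteq> 0"
    using vec_space.det_nonzero_if_full_rank_mult[OF Ft, of "transpose_mat E"] E rank
    unfolding qr(4)[symmetric] by simp
  note inv = mat_inverse_if_det_nonzero[OF Ft this, folded qr(5), folded Theta_def]
  show "invertible_mat (GA * E)" "Theta \<in> carrier_mat a a" "GA * E * Theta = 1\<^sub>m a"
    using inv by simp_all
  show "F * transpose_mat Theta = 1\<^sub>m a"
    using arg_cong[OF inv(2), of transpose_mat] transpose_mult[OF inv(3) Ft] F qr(5) by simp
qed

section \<open>Selecting rows and entries\<close>

lemma card_bounded_subset: "A \<subseteq> {..<L} \<Longrightarrow> card {i. i < L \<and> i \<in> A} = card A"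
  by (rule arg_cong[where f = card]) auto

lemma card_less_in_set_less_card:
  fixes A :: "nat set"
  assumes "A \<subseteq> {..<L}" "i \<in> A"
  shows "card {a \<in> A. a < i} < card A"
proof (rule psubset_card_mono)
  show "finite A" by (rule finite_subset[OF assms(1)]) simp
  show "{a \<in> A. a < i} \<subset> A" using assms(2) by auto
qed

lemma pick_less_bound: "A \<subseteq> {..<L} \<Longrightarrow> k < card A \<Longrightarrow> pick A k < L"
  using pick_in_set_le by blast

lemma row_sub_carrier:
  "G \<in> carrier_mat L p \<Longrightarrow> A \<subseteq> {..<L} \<Longrightarrow> row_sub G A \<in> carrier_mat (card A) p"
  unfolding row_sub_def by (auto simp: dim_submatrix card_bounded_subset)

lemma row_row_sub:
  "G \<in> carrier_mat L p \<Longrightarrow> A \<subseteq> {..<L} \<Longrightarrow> k < card A \<Longrightarrow> row (row_sub G A) k = row G (pick A k)"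
  unfolding row_sub_def by (rule row_submatrix_UNIV) (auto simp: card_bounded_subset)

lemma index_row_sub:
  assumes "G \<in> carrier_mat L p" "A \<subseteq> {..<L}" "k < card A" "j < p"
  shows "row_sub G A $$ (k, j) = G $$ (pick A k, j)"
  using arg_cong[OF row_row_sub[OF assms(1-3)], of "\<lambda>r. r $ j"] assms
    row_sub_carrier[OF assms(1,2)] pick_less_bound[OF assms(2,3)] by simp

lemma vec_sub_carrier:
  "v \<in> carrier_vec L \<Longrightarrow> A \<subseteq> {..<L} \<Longrightarrow> vec_sub v A \<in> carrier_vec (card A)"
  unfolding vec_sub_def by (auto simp: card_bounded_subset)

lemma index_vec_sub:
  "v \<in> carrier_vec L \<Longrightarrow> A \<subseteq> {..<L} \<Longrightarrow> k < card A \<Longrightarrow> vec_sub v A $ k = v $ pick A k"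
  unfolding vec_sub_def by (auto simp: card_bounded_subset)

lemma index_vec_sub_card:
  assumes "v \<in> carrier_vec L" "A \<subseteq> {..<L}" "i \<in> A"
  shows "vec_sub v A $ card {a \<in> A. a < i} = v $ i"
  using index_vec_sub[OF assms(1,2) card_less_in_set_less_card[OF assms(2,3)]]
  unfolding pick_card_in_set[OF assms(3)] .

lemma vec_sub_add:
  assumes u: "u \<in> carrier_vec L" and w: "w \<in> carrier_vec L" and A: "A \<subseteq> {..<L}"
  shows "vec_sub (u + w) A = vec_sub u A + vec_sub w A"
proof (rule eq_vecI)
  fix k assume "k < dim_vec (vec_sub u A + vec_sub w A)"
  then have k: "k < card A" using vec_sub_carrier[OF w A] by simp
  show "vec_sub (u + w) A $ k = (vec_sub u A + vec_sub w A) $ k"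
    using index_vec_sub[OF add_carrier_vec[OF u w] A k] index_vec_sub[OF u A k]
      index_vec_sub[OF w A k] pick_less_bound[OF A k] u w k vec_sub_carrier[OF w A] by simp
qed (use vec_sub_carrier[OF add_carrier_vec[OF u w] A] vec_sub_carrier[OF w A] in simp)

lemma vec_sub_mult_mat_vec:
  assumes G: "G \<in> carrier_mat L p" and A: "A \<subseteq> {..<L}"
  shows "vec_sub (G *\<^sub>v v) A = row_sub G A *\<^sub>v v"
proof -
  have Gv: "G *\<^sub>v v \<in> carrier_vec L" using G by (intro carrier_vecI) auto
  show ?thesis
  proof (rule eq_vecI)
    fix k assume "k < dim_vec (row_sub G A *\<^sub>v v)"
    then have k: "k < card A" using row_sub_carrier[OF G A] by simp
    show "vec_sub (G *\<^sub>v v) A $ k = (row_sub G A *\<^sub>v v) $ k"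
      unfolding index_vec_sub[OF Gv A k] using row_row_sub[OF G A k] pick_less_bound[OF A k] G
        row_sub_carrier[OF G A] k by simp
  qed (use vec_sub_carrier[OF Gv A] row_sub_carrier[OF G A] in simp)
qed

lemma vec_le_if_vec_sub_le:
  assumes u: "u \<in> carrier_vec L" and v: "v \<in> carrier_vec L"
    and cover: "{..<L} \<subseteq> A \<union> I" and A: "A \<subseteq> {..<L}" and I: "I \<subseteq> {..<L}"
    and le_A: "vec_sub u A \<le> vec_sub v A" and le_I: "vec_sub u I \<le> vec_sub v I"
  shows "u \<le> v"
proof -
  have le_sub: "u $ i \<le> v $ i" if X: "X \<subseteq> {..<L}" "i \<in> X" and le: "vec_sub u X \<le> vec_sub v X"
    for X i
  proof -
    let ?k = "card {a \<in> X. a < i}"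
    have "?k < dim_vec (vec_sub v X)"
      using card_less_in_set_less_card[OF X] vec_sub_carrier[OF v X(1)] by simp
    then have "vec_sub u X $ ?k \<le> vec_sub v X $ ?k" using le unfolding less_eq_vec_def by blast
    then show ?thesis unfolding index_vec_sub_card[OF u X] index_vec_sub_card[OF v X] .
  qed
  show ?thesis
    unfolding less_eq_vec_def using u v cover le_sub[OF A _ le_A] le_sub[OF I _ le_I] by auto
qed

text \<open>Entry k of vec_sub v A is v $ pick A k, so index i of A sits at position
  card {a \<in> A. a < i}.\<close>

definition zero_extend :: "nat \<Rightarrow> nat set \<Rightarrow> 'a :: zero vec \<Rightarrow> 'a vec" where
  "zero_extend L A v = vec L (\<lambda>i. if i \<in> A then v $ card {a \<in> A. a < i} else 0)"

lemma zero_extend_carrier [simp]: "zero_extend L A v \<in> carrier_vec L"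
  unfolding zero_extend_def by simp

lemma zero_extend_nonneg:
  fixes v :: "'a :: {zero, order} vec"
  assumes "A \<subseteq> {..<L}" "v \<ge> 0\<^sub>v (card A)"
  shows "zero_extend L A v \<ge> 0\<^sub>v L"
  using assms card_less_in_set_less_card[OF assms(1)]
  unfolding zero_extend_def less_eq_vec_def by auto

lemma vec_sub_zero_extend:
  assumes A: "A \<subseteq> {..<L}" and v: "v \<in> carrier_vec (card A)"
  shows "vec_sub (zero_extend L A v) A = v"
proof (rule eq_vecI)
  fix k assume "k < dim_vec v"
  then have k: "k < card A" using v by simp
  show "vec_sub (zero_extend L A v) A $ k = v $ k"
    unfolding index_vec_sub[OF zero_extend_carrier A k]
    using pick_less_bound[OF A k] pick_in_set_le[OF k] card_pick_le[OF k]
    by (simp add: zero_extend_def)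
qed (use v vec_sub_carrier[OF zero_extend_carrier[of L A v] A] in auto)

lemma vec_sub_zero_extend_disjoint:
  assumes I: "I \<subseteq> {..<L}" and disj: "A \<inter> I = {}"
  shows "vec_sub (zero_extend L A v) I = 0\<^sub>v (card I)"
proof (rule eq_vecI)
  fix k assume "k < dim_vec (0\<^sub>v (card I) :: 'a vec)"
  then have k: "k < card I" by simp
  show "vec_sub (zero_extend L A v) I $ k = 0\<^sub>v (card I) $ k"
    unfolding index_vec_sub[OF zero_extend_carrier I k]
    using pick_less_bound[OF I k] pick_in_set_le[OF k] disj k
    by (auto simp: zero_extend_def)
qed (use vec_sub_carrier[OF zero_extend_carrier[of L A v] I] in auto)

lemma transpose_mult_zero_extend:
  assumes G: "G \<in> carrier_mat L p" and A: "A \<subseteq> {..<L}" and v: "v \<in> carrier_vec (card A)"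
  shows "transpose_mat G *\<^sub>v zero_extend L A v = transpose_mat (row_sub G A) *\<^sub>v v"
proof (rule eq_vecI)
  have GA: "row_sub G A \<in> carrier_mat (card A) p" by (rule row_sub_carrier[OF G A])
  fix j assume "j < dim_vec (transpose_mat (row_sub G A) *\<^sub>v v)"
  then have j: "j < p" using GA by simp
  have "(transpose_mat G *\<^sub>v zero_extend L A v) $ j
      = (\<Sum>i \<in> {0..<L}. if i \<in> A then G $$ (i, j) * v $ card {a \<in> A. a < i} else 0)"
    using G j by (auto simp: scalar_prod_def zero_extend_def intro: sum.cong)
  also have "\<dots> = (\<Sum>i \<in> A. G $$ (i, j) * v $ card {a \<in> A. a < i})"
    using A by (simp add: sum.If_cases Int_absorb1 atLeast0LessThan)
  also have "\<dots> = (\<Sum>k \<in> {0..<card A}. G $$ (pick A k, j) * v $ k)"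
    by (rule sum.reindex_bij_witness[where j = "\<lambda>i. card {a \<in> A. a < i}" and i = "pick A"])
      (auto simp: card_less_in_set_less_card[OF A] pick_card_in_set pick_in_set_le card_pick_le)
  also have "\<dots> = (transpose_mat (row_sub G A) *\<^sub>v v) $ j"
    using GA v j by (auto simp: scalar_prod_def index_row_sub[OF G A] intro!: sum.cong)
  finally show "(transpose_mat G *\<^sub>v zero_extend L A v) $ j = (transpose_mat (row_sub G A) *\<^sub>v v) $ j" .
qed (use carrier_matD[OF G] carrier_matD[OF row_sub_carrier[OF G A]] in simp)

section \<open>Optimality in a convex QP\<close>

lemma qp_cost_add:
  assumes Hh: "Hh \<in> carrier_mat p p" and sym: "transpose_mat Hh = Hh" and c: "c \<in> carrier_vec p"
    and e: "e \<in> carrier_vec p" and d: "d \<in> carrier_vec p"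
  shows "qp_cost Hh c (e + d) = qp_cost Hh c e + d \<bullet> (Hh *\<^sub>v e + c) + 1/2 * (d \<bullet> (Hh *\<^sub>v d))"
proof -
  have He: "Hh *\<^sub>v e \<in> carrier_vec p" and Hd: "Hh *\<^sub>v d \<in> carrier_vec p" using Hh e d by auto
  have "(e + d) \<bullet> (Hh *\<^sub>v (e + d)) = e \<bullet> (Hh *\<^sub>v e) + e \<bullet> (Hh *\<^sub>v d) + (d \<bullet> (Hh *\<^sub>v e) + d \<bullet> (Hh *\<^sub>v d))"
    using e d He Hd
    by (simp add: mult_add_distrib_mat_vec[OF Hh e d] add_scalar_prod_distrib[of _ p]
        scalar_prod_add_distrib[of _ p])
  moreover have "e \<bullet> (Hh *\<^sub>v d) = d \<bullet> (Hh *\<^sub>v e)" by (rule scalar_prod_symmetric_mat[OF Hh sym e d])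
  moreover have "c \<bullet> (e + d) = c \<bullet> e + d \<bullet> c"
    using scalar_prod_add_distrib[OF c e d] comm_scalar_prod[OF c d] by simp
  moreover have "d \<bullet> (Hh *\<^sub>v e + c) = d \<bullet> (Hh *\<^sub>v e) + d \<bullet> c" by (rule scalar_prod_add_distrib[OF d He c])
  ultimately show ?thesis unfolding qp_cost_def by (simp add: algebra_simps)
qed

lemma index_feasible_constraint:
  assumes "qp_feasible G W S x eps" "G \<in> carrier_mat L p" "W \<in> carrier_vec L" "S \<in> carrier_mat L n"
    "i < L"
  shows "row G i \<bullet> eps \<le> W $ i + row S i \<bullet> x"
  using assms unfolding qp_feasible_def less_eq_vec_def by auto

lemma active_or_inactive:
  assumes "qp_feasible G W S x eps" "G \<in> carrier_mat L p" "W \<in> carrier_vec L" "S \<in> carrier_mat L n"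
    "i < L"
  shows "i \<in> active_set G W S x eps \<or> i \<in> inactive_set G W S x eps"
  using index_feasible_constraint[OF assms] assms(2,5)
  unfolding active_set_def inactive_set_def by auto

lemma active_inactive_partition:
  assumes "qp_feasible G W S x eps" "G \<in> carrier_mat L p" "W \<in> carrier_vec L" "S \<in> carrier_mat L n"
  shows "active_set G W S x eps \<subseteq> {..<L}" "inactive_set G W S x eps \<subseteq> {..<L}"
    "active_set G W S x eps \<inter> inactive_set G W S x eps = {}"
    "{..<L} \<subseteq> active_set G W S x eps \<union> inactive_set G W S x eps"
  using active_or_inactive[OF assms] assms(2) unfolding active_set_def inactive_set_def by auto

lemma multiplier_weighted_constraints_le:
  assumes G: "G \<in> carrier_mat L p" and W: "W \<in> carrier_vec L" and S: "S \<in> carrier_mat L n"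
    and kkt: "lagrange_multipliers Hh c G W S x eps lam" and feas': "qp_feasible G W S x e'"
  shows "lam \<bullet> (G *\<^sub>v e') \<le> lam \<bullet> (G *\<^sub>v eps)"
proof -
  have lam: "lam \<in> carrier_vec L" "lam \<ge> 0\<^sub>v L"
    and compl: "\<forall>i < L. lam $ i * (row G i \<bullet> eps - W $ i - row S i \<bullet> x) = 0"
    using kkt G unfolding lagrange_multipliers_def by auto
  have "lam \<bullet> (G *\<^sub>v e') = (\<Sum>i<L. lam $ i * (row G i \<bullet> e'))"
    using lam G by (simp add: scalar_prod_def lessThan_atLeast0)
  also have "\<dots> \<le> (\<Sum>i<L. lam $ i * (W $ i + row S i \<bullet> x))"
    using lam index_feasible_constraint[OF feas' G W S]
    by (intro sum_mono mult_left_mono) (auto simp: less_eq_vec_def)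
  also have "\<dots> = (\<Sum>i<L. lam $ i * (row G i \<bullet> eps))"
    using compl by (intro sum.cong) (auto simp: algebra_simps)
  also have "\<dots> = lam \<bullet> (G *\<^sub>v eps)"
    using lam G by (simp add: scalar_prod_def lessThan_atLeast0)
  finally show ?thesis .
qed

lemma qp_optimizer_if_kkt:
  assumes Hh: "Hh \<in> carrier_mat p p" and sym: "transpose_mat Hh = Hh"
    and psd: "\<And>v. v \<in> carrier_vec p \<Longrightarrow> 0 \<le> v \<bullet> (Hh *\<^sub>v v)"
    and G: "G \<in> carrier_mat L p" and c: "c \<in> carrier_vec p" and W: "W \<in> carrier_vec L"
    and S: "S \<in> carrier_mat L n"
    and feas: "qp_feasible G W S x eps" and kkt: "lagrange_multipliers Hh c G W S x eps lam"
  shows "qp_optimizer Hh c G W S x eps"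
  unfolding qp_optimizer_def
proof (intro conjI allI impI feas)
  fix e' assume feas': "qp_feasible G W S x e'"
  have eps: "eps \<in> carrier_vec p" and e': "e' \<in> carrier_vec p"
    using feas feas' G unfolding qp_feasible_def by auto
  have lam: "lam \<in> carrier_vec L" and stat: "Hh *\<^sub>v eps + c + transpose_mat G *\<^sub>v lam = 0\<^sub>v p"
    using kkt G unfolding lagrange_multipliers_def by auto
  define d where "d = e' - eps"
  have d: "d \<in> carrier_vec p" and e'_eq: "e' = eps + d" unfolding d_def using e' eps by auto
  have "d \<bullet> (Hh *\<^sub>v eps + c) = - (d \<bullet> (transpose_mat G *\<^sub>v lam))"
  proof -
    have "Hh *\<^sub>v eps + c = - (transpose_mat G *\<^sub>v lam)"
    proof (rule eq_vecI)
      fix i assume "i < dim_vec (- (transpose_mat G *\<^sub>v lam))"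
      then show "(Hh *\<^sub>v eps + c) $ i = (- (transpose_mat G *\<^sub>v lam)) $ i"
        using arg_cong[OF stat, of "\<lambda>v. v $ i"] Hh c G by simp
    qed (use Hh c G in simp)
    then show ?thesis using d G lam by simp
  qed
  also have "d \<bullet> (transpose_mat G *\<^sub>v lam) = lam \<bullet> (G *\<^sub>v e') - lam \<bullet> (G *\<^sub>v eps)"
    using transpose_vec_mult_scalar[OF G d lam] comm_scalar_prod[OF d, of "transpose_mat G *\<^sub>v lam"]
      G lam e' eps unfolding d_def by (simp add: mult_minus_distrib_mat_vec scalar_prod_minus_distrib[of _ L])
  finally have "0 \<le> d \<bullet> (Hh *\<^sub>v eps + c)"
    using multiplier_weighted_constraints_le[OF G W S kkt feas'] by simp
  then show "qp_cost Hh c eps \<le> qp_cost Hh c e'"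
    unfolding e'_eq qp_cost_add[OF Hh sym c eps d] using psd[OF d] by simp
qed

lemma kkt_from_active_set:
  assumes G: "G \<in> carrier_mat L p" and W: "W \<in> carrier_vec L" and S: "S \<in> carrier_mat L n"
    and x: "x \<in> carrier_vec n" and eps: "eps \<in> carrier_vec p"
    and A: "A \<subseteq> {..<L}" and I: "I \<subseteq> {..<L}" and cover: "{..<L} \<subseteq> A \<union> I"
    and la: "la \<in> carrier_vec (card A)" "la \<ge> 0\<^sub>v (card A)"
    and tight: "row_sub G A *\<^sub>v eps = row_sub S A *\<^sub>v x + vec_sub W A"
    and slack: "row_sub G I *\<^sub>v eps \<le> row_sub S I *\<^sub>v x + vec_sub W I"
    and stat: "Hh *\<^sub>v eps + c + transpose_mat (row_sub G A) *\<^sub>v la = 0\<^sub>v p"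
  shows "qp_feasible G W S x eps" and "lagrange_multipliers Hh c G W S x eps (zero_extend L A la)"
proof -
  define b where "b = W + S *\<^sub>v x"
  have Sx: "S *\<^sub>v x \<in> carrier_vec L" using S x by simp
  have Ge: "G *\<^sub>v eps \<in> carrier_vec L" and b: "b \<in> carrier_vec L" unfolding b_def using G W S x eps by auto
  have sub_eq: "vec_sub (G *\<^sub>v eps) X = row_sub G X *\<^sub>v eps"
    "vec_sub b X = row_sub S X *\<^sub>v x + vec_sub W X" if "X \<subseteq> {..<L}" for X
    unfolding b_def vec_sub_add[OF W Sx that] vec_sub_mult_mat_vec[OF G that] vec_sub_mult_mat_vec[OF S that]
    using vec_sub_carrier[OF W that] row_sub_carrier[OF S that] x
    by (auto intro!: comm_add_vec)
  have active: "row G i \<bullet> eps - W $ i - row S i \<bullet> x = 0" if "i \<in> A" for i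
  proof -
    have "(G *\<^sub>v eps) $ i = b $ i"
      using index_vec_sub_card[OF Ge A that] index_vec_sub_card[OF b A that] tight sub_eq[OF A] by simp
    then show ?thesis using A that G W S unfolding b_def by auto
  qed
  show "qp_feasible G W S x eps"
    unfolding qp_feasible_def b_def[symmetric]
    using vec_le_if_vec_sub_le[OF Ge b cover A I] eps G tight slack sub_eq[OF A] sub_eq[OF I] by simp
  show "lagrange_multipliers Hh c G W S x eps (zero_extend L A la)"
    unfolding lagrange_multipliers_def
    using G zero_extend_nonneg[OF A la(2)] transpose_mult_zero_extend[OF G A la(1)] stat active
    by (auto simp: zero_extend_def)
qed

lemma exists_feasible_step:
  assumes feas: "qp_feasible G W S x eps" and G: "G \<in> carrier_mat L p" and W: "W \<in> carrier_vec L"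
    and S: "S \<in> carrier_mat L n" and e: "e \<in> carrier_vec p"
    and orth: "\<And>i. i \<in> active_set G W S x eps \<Longrightarrow> row G i \<bullet> e = 0"
  shows "\<exists>t > 0. qp_feasible G W S x (eps + (- t) \<cdot>\<^sub>v e)"
proof -
  have eps: "eps \<in> carrier_vec p" using feas G unfolding qp_feasible_def by simp
  define s where "s i = row G i \<bullet> eps - W $ i - row S i \<bullet> x" for i
  have "\<forall>\<^sub>F t in at_right 0. s i - t * (row G i \<bullet> e) \<le> 0" if i: "i < L" for i
  proof (cases "i \<in> active_set G W S x eps")
    case True
    then show ?thesis using orth unfolding active_set_def s_def by simp
  next
    case False
    then have "s i < 0" using active_or_inactive[OF feas G W S i]
      unfolding inactive_set_def s_def by simp
    moreover have "((\<lambda>t. s i - t * (row G i \<bullet> e)) \<longlongrightarrow> s i) (at_right 0)"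
      by (auto intro!: tendsto_eq_intros)
    ultimately have "\<forall>\<^sub>F t in at_right 0. s i - t * (row G i \<bullet> e) < 0"
      by (rule order_tendstoD(2)[rotated])
    then show ?thesis by (rule eventually_mono) simp
  qed
  then have "\<forall>\<^sub>F t in at_right 0. 0 < t \<and> (\<forall>i \<in> {..<L}. s i - t * (row G i \<bullet> e) \<le> 0)"
    by (intro eventually_conj eventually_at_right_less eventually_ball_finite) auto
  then obtain t :: real where t: "0 < t" and slack: "\<And>i. i < L \<Longrightarrow> s i - t * (row G i \<bullet> e) \<le> 0"
    using eventually_happens'[OF trivial_limit_at_right_real] by blast
  have "qp_feasible G W S x (eps + (- t) \<cdot>\<^sub>v e)"
    unfolding qp_feasible_def less_eq_vec_def
  proof (intro conjI allI impI)
    fix i assume "i < dim_vec (W + S *\<^sub>v x)"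
    then have i: "i < L" using S by simp
    have "row G i \<bullet> (eps + (- t) \<cdot>\<^sub>v e) = row G i \<bullet> eps - t * (row G i \<bullet> e)"
      using G e eps i by (simp add: scalar_prod_add_distrib[of _ p])
    then show "(G *\<^sub>v (eps + (- t) \<cdot>\<^sub>v e)) $ i \<le> (W + S *\<^sub>v x) $ i"
      using slack[OF i] G W S i unfolding s_def by simp
  qed (use G W S eps e in auto)
  then show ?thesis using t by blast
qed

lemma exists_active_row_not_orthogonal:
  assumes Hh: "Hh \<in> carrier_mat p p" and sym: "transpose_mat Hh = Hh"
    and e: "e \<in> carrier_vec p" and Hh_e: "Hh *\<^sub>v e = 0\<^sub>v p"
    and c: "c \<in> carrier_vec p" and descent: "c \<bullet> e > 0"
    and G: "G \<in> carrier_mat L p" and W: "W \<in> carrier_vec L" and S: "S \<in> carrier_mat L n"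
    and opt: "qp_optimizer Hh c G W S x eps"
  shows "\<exists>i \<in> active_set G W S x eps. row G i \<bullet> e \<noteq> 0"
proof (rule ccontr)
  assume "\<not> ?thesis"
  moreover have feas: "qp_feasible G W S x eps" using opt unfolding qp_optimizer_def by blast
  ultimately obtain t :: real where t: "0 < t" and feas': "qp_feasible G W S x (eps + (- t) \<cdot>\<^sub>v e)"
    using exists_feasible_step[OF _ G W S e] by blast
  define d where "d = (- t) \<cdot>\<^sub>v e"
  have eps: "eps \<in> carrier_vec p" using feas G unfolding qp_feasible_def by simp
  have d: "d \<in> carrier_vec p" unfolding d_def using e by simp
  have "qp_cost Hh c eps \<le> qp_cost Hh c (eps + d)"
    using opt feas' unfolding qp_optimizer_def d_def by blast
  moreover have "Hh *\<^sub>v d = 0\<^sub>v p" unfolding d_def using Hh e Hh_e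
    by (simp add: mult_mat_vec, intro eq_vecI) auto
  moreover have "d \<bullet> (Hh *\<^sub>v eps) = 0"
    using scalar_prod_symmetric_mat[OF Hh sym d eps] \<open>Hh *\<^sub>v d = 0\<^sub>v p\<close> eps by simp
  moreover have "d \<bullet> c = - t * (c \<bullet> e)" unfolding d_def using e c by (simp add: comm_scalar_prod[of _ p])
  ultimately show False
    using qp_cost_add[OF Hh sym c eps d] scalar_prod_add_distrib[OF d _ c, of "Hh *\<^sub>v eps"] Hh eps d
      mult_pos_pos[OF t descent] by simp
qed

section \<open>The Hessian of the min-max QP\<close>

abbreviation zero_pad :: "'a :: zero mat \<Rightarrow> nat \<Rightarrow> 'a mat" where
  "zero_pad H k \<equiv> four_block_mat H (0\<^sub>m k 1) (0\<^sub>m 1 k) (0\<^sub>m 1 1)"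

lemma zero_pad_carrier: "H \<in> carrier_mat k k \<Longrightarrow> zero_pad H k \<in> carrier_mat (k + 1) (k + 1)"
  by (intro four_block_carrier_mat) auto

lemma transpose_zero_pad:
  assumes "H \<in> carrier_mat k k" "transpose_mat H = H"
  shows "transpose_mat (zero_pad H k) = zero_pad H k"
  by (subst transpose_four_block_mat[OF assms(1) zero_carrier_mat zero_carrier_mat zero_carrier_mat])
    (simp add: assms(2))

lemma zero_pad_mult_unit_vec: "H \<in> carrier_mat k k \<Longrightarrow> zero_pad H k *\<^sub>v unit_vec (k + 1) k = 0\<^sub>v (k + 1)"
  by (intro eq_vecI) (auto simp: scalar_prod_def)

lemma zero_pad_quadratic_form:
  fixes H :: "'a :: comm_ring mat"
  assumes H: "H \<in> carrier_mat k k" and v: "v \<in> carrier_vec (k + 1)"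
  shows "v \<bullet> (zero_pad H k *\<^sub>v v) = vec_first v k \<bullet> (H *\<^sub>v vec_first v k)"
proof -
  have split: "v = vec_first v k @\<^sub>v vec_last v 1" using v by simp
  have "zero_pad H k *\<^sub>v (vec_first v k @\<^sub>v vec_last v 1)
      = (H *\<^sub>v vec_first v k + 0\<^sub>m k 1 *\<^sub>v vec_last v 1) @\<^sub>v (0\<^sub>m 1 k *\<^sub>v vec_first v k + 0\<^sub>m 1 1 *\<^sub>v vec_last v 1)"
    by (rule four_block_mat_mult_vec[OF H]) auto
  also have "\<dots> = (H *\<^sub>v vec_first v k) @\<^sub>v 0\<^sub>v 1" using H by simp
  finally have "v \<bullet> (zero_pad H k *\<^sub>v v) = (vec_first v k @\<^sub>v vec_last v 1) \<bullet> ((H *\<^sub>v vec_first v k) @\<^sub>v 0\<^sub>v 1)"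
    using split by simp
  then show ?thesis using H by (simp add: scalar_prod_append[of _ k _ 1])
qed

lemma zero_pad_psd:
  assumes "H \<in> carrier_mat k k" "posdef_mat H" "v \<in> carrier_vec (k + 1)"
  shows "0 \<le> v \<bullet> (zero_pad H k *\<^sub>v v)"
  using assms zero_pad_quadratic_form[OF assms(1,3)] unfolding posdef_mat_def
  by (cases "vec_first v k = 0\<^sub>v k") (auto intro: less_imp_le)

lemma zero_pad_convex:
  assumes "H \<in> carrier_mat k k" "posdef_mat H"
  shows "zero_pad H k \<in> carrier_mat (k + 1) (k + 1)" "transpose_mat (zero_pad H k) = zero_pad H k"
    "\<And>v. v \<in> carrier_vec (k + 1) \<Longrightarrow> 0 \<le> v \<bullet> (zero_pad H k *\<^sub>v v)"
  using zero_pad_carrier transpose_zero_pad zero_pad_psd assms unfolding posdef_mat_def by blast+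

lemma zero_pad_definite_on_hyperplane:
  assumes H: "H \<in> carrier_mat k k" "posdef_mat H"
    and v: "v \<in> carrier_vec (k + 1)" and r: "r \<in> carrier_vec (k + 1)" and rk: "r $ k \<noteq> 0"
    and orth: "r \<bullet> v = 0" and flat: "v \<bullet> (zero_pad H k *\<^sub>v v) = 0"
  shows "v = 0\<^sub>v (k + 1)"
proof -
  have "vec_first v k = 0\<^sub>v k"
    using H flat zero_pad_quadratic_form[OF H(1) v] unfolding posdef_mat_def by force
  then have first: "v $ i = 0" if "i < k" for i
  proof -
    have "v $ i = vec_first v k $ i" using that by (simp add: vec_first_def)
    then show ?thesis using \<open>vec_first v k = 0\<^sub>v k\<close> that by simp
  qed
  have "r \<bullet> v = r $ k * v $ k"
    using r v first by (simp add: scalar_prod_def sum.atLeast0_lessThan_Suc)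
  then have "v $ k = 0" using orth rk by simp
  then show ?thesis using v first by (intro eq_vecI) (auto simp: less_Suc_eq)
qed

lemma det_reduced_hessian_nonzero:
  fixes J Hh GA :: "real mat"
  assumes J: "J \<in> carrier_mat p q" and Hh: "Hh \<in> carrier_mat p p" and GA: "GA \<in> carrier_mat a p"
    and JJ: "transpose_mat J * J = 1\<^sub>m q" and GAJ: "GA * J = 0\<^sub>m a q"
    and definite: "\<And>w. w \<in> carrier_vec p \<Longrightarrow> GA *\<^sub>v w = 0\<^sub>v a \<Longrightarrow> w \<bullet> (Hh *\<^sub>v w) = 0 \<Longrightarrow> w = 0\<^sub>v p"
  shows "det (transpose_mat J * Hh * J) \<noteq> 0"
proof
  have M: "transpose_mat J * Hh * J \<in> carrier_mat q q" using J Hh by simp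
  note dims = carrier_matD[OF J] carrier_matD[OF Hh] carrier_matD[OF GA]
  assume "det (transpose_mat J * Hh * J) = 0"
  then obtain v where v: "v \<in> carrier_vec q" "v \<noteq> 0\<^sub>v q" and Mv: "(transpose_mat J * Hh * J) *\<^sub>v v = 0\<^sub>v q"
    using det_0_iff_vec_prod_zero_field[OF M] by blast
  define w where "w = J *\<^sub>v v"
  have w: "w \<in> carrier_vec p" unfolding w_def using J v by simp
  have "w \<bullet> (Hh *\<^sub>v w) = v \<bullet> ((transpose_mat J * Hh * J) *\<^sub>v v)"
    unfolding w_def using transpose_vec_mult_scalar[OF J v(1), of "Hh *\<^sub>v (J *\<^sub>v v)"] J Hh v
      comm_scalar_prod[of "transpose_mat J *\<^sub>v (Hh *\<^sub>v (J *\<^sub>v v))" q v]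
      comm_scalar_prod[of "J *\<^sub>v v" p "Hh *\<^sub>v (J *\<^sub>v v)"]
    by (simp add: mult_mat_vec_dim_simps dims)
  moreover have "GA *\<^sub>v w = 0\<^sub>v a"
    unfolding w_def using GAJ v by (simp add: assoc_mult_mat_vec_dim[symmetric] dims)
  ultimately have "w = 0\<^sub>v p" using definite[OF w] Mv v by simp
  then have "(transpose_mat J * J) *\<^sub>v v = 0\<^sub>v q"
    using v J unfolding w_def by (simp add: assoc_mult_mat_vec_dim dims)
  then show False using JJ v by simp
qed

lemma exists_active_epigraph_row:
  fixes H G S :: "real mat"
  assumes H: "H \<in> carrier_mat k k" "posdef_mat H" and G: "G \<in> carrier_mat L (k + 1)"
    and W: "W \<in> carrier_vec L" and S: "S \<in> carrier_mat L n"
    and opt: "qp_optimizer (zero_pad H k) (unit_vec (k + 1) k) G W S x eps"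
  shows "\<exists>i \<in> active_set G W S x eps. G $$ (i, k) \<noteq> 0"
proof -
  obtain i where "i \<in> active_set G W S x eps" "row G i \<bullet> unit_vec (k + 1) k \<noteq> 0"
    using exists_active_row_not_orthogonal[OF zero_pad_convex(1,2)[OF H] unit_vec_carrier
        zero_pad_mult_unit_vec[OF H(1)] unit_vec_carrier _ G W S opt] by auto
  then show ?thesis using G unfolding active_set_def by auto
qed

lemma reduced_hessian_inverse:
  fixes H G J :: "real mat"
  assumes H: "H \<in> carrier_mat k k" "posdef_mat H" and G: "G \<in> carrier_mat L (k + 1)"
    and A: "A \<subseteq> {..<L}" and i0: "i0 \<in> A" "G $$ (i0, k) \<noteq> 0"
    and J: "J \<in> carrier_mat (k + 1) q" and JJ: "transpose_mat J * J = 1\<^sub>m q"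
    and GAJ: "row_sub G A * J = 0\<^sub>m (card A) q"
  defines "Psi \<equiv> the (mat_inverse (transpose_mat J * zero_pad H k * J))"
  shows "invertible_mat (transpose_mat J * zero_pad H k * J)" "Psi \<in> carrier_mat q q"
    "transpose_mat J * zero_pad H k * J * Psi = 1\<^sub>m q"
proof -
  have "det (transpose_mat J * zero_pad H k * J) \<noteq> 0"
  proof (rule det_reduced_hessian_nonzero[OF J _ row_sub_carrier[OF G A] JJ GAJ])
    fix w :: "real vec"
    assume w: "w \<in> carrier_vec (k + 1)" and GAw: "row_sub G A *\<^sub>v w = 0\<^sub>v (card A)"
      and flat: "w \<bullet> (zero_pad H k *\<^sub>v w) = 0"
    have Gw: "G *\<^sub>v w \<in> carrier_vec L" using G by (intro carrier_vecI) auto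
    have "row G i0 \<bullet> w = vec_sub (G *\<^sub>v w) A $ card {a \<in> A. a < i0}"
      using index_vec_sub_card[OF Gw A i0(1)] G A i0(1) by auto
    also have "\<dots> = 0"
      unfolding vec_sub_mult_mat_vec[OF G A] GAw using card_less_in_set_less_card[OF A i0(1)] by simp
    finally show "w = 0\<^sub>v (k + 1)"
      using zero_pad_definite_on_hyperplane[OF H w _ _ _ flat, of "row G i0"] G A i0 by auto
  qed (rule zero_pad_carrier[OF H(1)])
  moreover have "transpose_mat J * zero_pad H k * J \<in> carrier_mat q q"
    using J zero_pad_carrier[OF H(1)] by simp
  ultimately show "invertible_mat (transpose_mat J * zero_pad H k * J)" "Psi \<in> carrier_mat q q"
    "transpose_mat J * zero_pad H k * J * Psi = 1\<^sub>m q"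
    unfolding Psi_def using mat_inverse_if_det_nonzero by blast+
qed

section \<open>The explicit affine laws\<close>

lemma null_space_step:
  fixes E J Hh GA Psi :: "real mat"
  assumes E: "E \<in> carrier_mat p a" and J: "J \<in> carrier_mat p q" and Hh: "Hh \<in> carrier_mat p p"
    and GA: "GA \<in> carrier_mat a' p" and Psi: "Psi \<in> carrier_mat q q"
    and y: "y \<in> carrier_vec a" and c: "c \<in> carrier_vec p"
    and GAJ: "GA * J = 0\<^sub>m a' q" and Psi_inv: "transpose_mat J * Hh * J * Psi = 1\<^sub>m q"
  defines "z \<equiv> Psi *\<^sub>v (transpose_mat J *\<^sub>v (Hh *\<^sub>v (E *\<^sub>v y) + c))"
  shows "GA *\<^sub>v (E *\<^sub>v y - J *\<^sub>v z) = GA *\<^sub>v (E *\<^sub>v y)"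
    and "transpose_mat J *\<^sub>v (Hh *\<^sub>v (E *\<^sub>v y - J *\<^sub>v z) + c) = 0\<^sub>v q"
proof -
  define r where "r = transpose_mat J *\<^sub>v (Hh *\<^sub>v (E *\<^sub>v y) + c)"
  have r: "r \<in> carrier_vec q" and z: "z \<in> carrier_vec q"
    unfolding r_def z_def using E J Hh Psi y c by auto
  note dims = carrier_matD[OF E] carrier_matD[OF J] carrier_matD[OF Hh] carrier_matD[OF GA]
    carrier_matD[OF Psi] carrier_vecD[OF y] carrier_vecD[OF c] carrier_vecD[OF z]
  have "GA *\<^sub>v (J *\<^sub>v z) = 0\<^sub>v a'"
    using GAJ z by (simp add: assoc_mult_mat_vec_dim[symmetric] dims)
  then show "GA *\<^sub>v (E *\<^sub>v y - J *\<^sub>v z) = GA *\<^sub>v (E *\<^sub>v y)"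
    using GA E J y z by (simp add: mult_minus_distrib_mat_vec[of GA a' p])
  have "transpose_mat J *\<^sub>v (Hh *\<^sub>v (J *\<^sub>v z)) = (transpose_mat J * Hh * J * Psi) *\<^sub>v r"
    unfolding z_def r_def[symmetric] using r by (simp add: mult_mat_vec_dim_simps dims)
  also have "\<dots> = r" using r Psi_inv by simp
  finally have "transpose_mat J *\<^sub>v (Hh *\<^sub>v (J *\<^sub>v z)) = r" .
  moreover have "transpose_mat J *\<^sub>v (Hh *\<^sub>v (E *\<^sub>v y - J *\<^sub>v z) + c) = r - transpose_mat J *\<^sub>v (Hh *\<^sub>v (J *\<^sub>v z))"
    unfolding r_def using E J Hh y z c
    by (simp add: mult_mat_vec_dim_simps dims, intro eq_vecI) auto
  ultimately show "transpose_mat J *\<^sub>v (Hh *\<^sub>v (E *\<^sub>v y - J *\<^sub>v z) + c) = 0\<^sub>v q"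
    using r by simp
qed

lemma stationarity_in_range:
  fixes E J GA Theta F :: "real mat"
  assumes E: "E \<in> carrier_mat p a" and J: "J \<in> carrier_mat p q" and F: "F \<in> carrier_mat a a"
    and Theta: "Theta \<in> carrier_mat a a" and g: "g \<in> carrier_vec p"
    and EJ: "E * transpose_mat E + J * transpose_mat J = 1\<^sub>m p"
    and QR: "transpose_mat GA = E * F" and F_Theta: "F * transpose_mat Theta = 1\<^sub>m a"
    and Jg: "transpose_mat J *\<^sub>v g = 0\<^sub>v q"
  shows "g + transpose_mat GA *\<^sub>v (- (transpose_mat Theta *\<^sub>v (transpose_mat E *\<^sub>v g))) = 0\<^sub>v p"
proof -
  note dims = carrier_matD[OF E] carrier_matD[OF J] carrier_matD[OF F] carrier_matD[OF Theta]
    carrier_vecD[OF g]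
  have "transpose_mat GA *\<^sub>v (transpose_mat Theta *\<^sub>v (transpose_mat E *\<^sub>v g))
      = (E * (F * transpose_mat Theta)) *\<^sub>v (transpose_mat E *\<^sub>v g)"
    unfolding QR by (simp add: mult_mat_vec_dim_simps dims)
  also have "\<dots> = E *\<^sub>v (transpose_mat E *\<^sub>v g)" unfolding F_Theta using E by simp
  also have "\<dots> = (E * transpose_mat E + J * transpose_mat J) *\<^sub>v g"
    using Jg E g by (simp add: mult_mat_vec_dim_simps dims)
  also have "\<dots> = g" unfolding EJ using g by simp
  finally show ?thesis using E QR F Theta g by (simp add: mult_mat_vec_dim_simps dims)
qed

lemma explicit_laws_kkt_equalities:
  fixes E J Hh GA Theta Psi F SA :: "real mat" and WA c x :: "real vec"
  assumes E: "E \<in> carrier_mat p a" and J: "J \<in> carrier_mat p q" and Hh: "Hh \<in> carrier_mat p p"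
    and GA: "GA \<in> carrier_mat a p" and Theta: "Theta \<in> carrier_mat a a"
    and Psi: "Psi \<in> carrier_mat q q" and F: "F \<in> carrier_mat a a" and SA: "SA \<in> carrier_mat a n"
    and WA: "WA \<in> carrier_vec a" and c: "c \<in> carrier_vec p" and x: "x \<in> carrier_vec n"
    and GAE_Theta: "GA * E * Theta = 1\<^sub>m a" and GAJ: "GA * J = 0\<^sub>m a q"
    and Psi_inv: "transpose_mat J * Hh * J * Psi = 1\<^sub>m q"
    and EJ: "E * transpose_mat E + J * transpose_mat J = 1\<^sub>m p"
    and QR: "transpose_mat GA = E * F" and F_Theta: "F * transpose_mat Theta = 1\<^sub>m a"
    and Keps_def: "Keps = E * Theta * SA - J * Psi * transpose_mat J * Hh * E * Theta * SA"
    and beps_def: "beps = (E - J * Psi * transpose_mat J * Hh * E) * Theta *\<^sub>v WA - J * Psi * transpose_mat J *\<^sub>v c"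
    and Klam_def: "Klam = - (transpose_mat Theta * transpose_mat E * (Hh * Keps))"
    and blam_def: "blam = - (transpose_mat Theta * transpose_mat E *\<^sub>v (Hh *\<^sub>v beps + c))"
  shows "GA *\<^sub>v (Keps *\<^sub>v x + beps) = SA *\<^sub>v x + WA"
    and "Hh *\<^sub>v (Keps *\<^sub>v x + beps) + c + transpose_mat GA *\<^sub>v (Klam *\<^sub>v x + blam) = 0\<^sub>v p"
proof -
  define y where "y = Theta *\<^sub>v (SA *\<^sub>v x + WA)"
  define z where "z = Psi *\<^sub>v (transpose_mat J *\<^sub>v (Hh *\<^sub>v (E *\<^sub>v y) + c))"
  define g where "g = Hh *\<^sub>v (Keps *\<^sub>v x + beps) + c"
  have y: "y \<in> carrier_vec a" unfolding y_def using Theta SA WA x by simp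
  note dims = carrier_matD[OF E] carrier_matD[OF J] carrier_matD[OF Hh] carrier_matD[OF GA]
    carrier_matD[OF Theta] carrier_matD[OF Psi] carrier_matD[OF SA] carrier_vecD[OF WA]
    carrier_vecD[OF c] carrier_vecD[OF x] carrier_vecD[OF y]
  have eps: "Keps *\<^sub>v x + beps = E *\<^sub>v y - J *\<^sub>v z"
    unfolding Keps_def beps_def y_def z_def using Theta SA WA x
    by (simp add: mult_mat_vec_dim_simps dims, intro eq_vecI) (auto simp: dims)
  note step = null_space_step[OF E J Hh GA Psi y c GAJ Psi_inv, folded z_def eps]
  have "GA *\<^sub>v (E *\<^sub>v y) = (GA * E * Theta) *\<^sub>v (SA *\<^sub>v x + WA)"
    unfolding y_def using SA WA x by (simp add: assoc_mult_mat_vec_dim dims)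
  then show "GA *\<^sub>v (Keps *\<^sub>v x + beps) = SA *\<^sub>v x + WA"
    unfolding step(1) GAE_Theta using SA WA x by simp
  have g: "g \<in> carrier_vec p" unfolding g_def eps z_def using E J Hh Psi y c by simp
  have lam: "Klam *\<^sub>v x + blam = - (transpose_mat Theta *\<^sub>v (transpose_mat E *\<^sub>v g))"
    unfolding Klam_def blam_def g_def Keps_def beps_def using x
    by (simp add: mult_mat_vec_dim_simps dims, intro eq_vecI) (auto simp: dims)
  show "Hh *\<^sub>v (Keps *\<^sub>v x + beps) + c + transpose_mat GA *\<^sub>v (Klam *\<^sub>v x + blam) = 0\<^sub>v p"
    unfolding lam g_def[symmetric]
    by (rule stationarity_in_range[OF E J F Theta g EJ QR F_Theta step(2)[folded g_def]])
qed

lemma affine_le_iff: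
  fixes M K N :: "real mat"
  assumes M: "M \<in> carrier_mat r p" and K: "K \<in> carrier_mat p n" and N: "N \<in> carrier_mat r n"
    and b: "b \<in> carrier_vec p" and w: "w \<in> carrier_vec r" and x: "x \<in> carrier_vec n"
  shows "(M * K - N) *\<^sub>v x \<le> w - M *\<^sub>v b \<longleftrightarrow> M *\<^sub>v (K *\<^sub>v x + b) \<le> N *\<^sub>v x + w"
proof -
  have "(M * K - N) *\<^sub>v x = M *\<^sub>v (K *\<^sub>v x) - N *\<^sub>v x"
    using M K N x by (simp add: minus_mult_distrib_mat_vec[of "M * K" r n N x] assoc_mult_mat_vec[OF M K x])
  moreover have "M *\<^sub>v (K *\<^sub>v x + b) = M *\<^sub>v (K *\<^sub>v x) + M *\<^sub>v b"
    using M K b x by (simp add: mult_add_distrib_mat_vec)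
  ultimately show ?thesis
    using M K N b w x unfolding less_eq_vec_def by (auto simp: algebra_simps)
qed

lemma nonneg_affine_iff:
  fixes K :: "real mat"
  assumes K: "K \<in> carrier_mat a n" and b: "b \<in> carrier_vec a" and x: "x \<in> carrier_vec n"
  shows "(- K) *\<^sub>v x \<le> b \<longleftrightarrow> 0\<^sub>v a \<le> K *\<^sub>v x + b"
  using K b x unfolding less_eq_vec_def by auto

lemma affine_laws_optimal_on_region:
  fixes Hh G S Keps Klam :: "real mat" and c W beps blam :: "real vec"
  assumes Hh: "Hh \<in> carrier_mat p p" and sym: "transpose_mat Hh = Hh"
    and psd: "\<And>v. v \<in> carrier_vec p \<Longrightarrow> 0 \<le> v \<bullet> (Hh *\<^sub>v v)"
    and c: "c \<in> carrier_vec p" and G: "G \<in> carrier_mat L p" and W: "W \<in> carrier_vec L"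
    and S: "S \<in> carrier_mat L n"
    and unique: "\<forall>x \<in> feasible_states G W S. \<exists>!eps. qp_optimizer Hh c G W S x eps"
    and A: "A \<subseteq> {..<L}" and I: "I \<subseteq> {..<L}" and disj: "A \<inter> I = {}"
    and cover: "{..<L} \<subseteq> A \<union> I"
    and Keps: "Keps \<in> carrier_mat p n" and beps: "beps \<in> carrier_vec p"
    and Klam: "Klam \<in> carrier_mat (card A) n" and blam: "blam \<in> carrier_vec (card A)"
    and tight: "\<And>x. x \<in> carrier_vec n \<Longrightarrow>
      row_sub G A *\<^sub>v (Keps *\<^sub>v x + beps) = row_sub S A *\<^sub>v x + vec_sub W A"
    and stat: "\<And>x. x \<in> carrier_vec n \<Longrightarrow>
      Hh *\<^sub>v (Keps *\<^sub>v x + beps) + c + transpose_mat (row_sub G A) *\<^sub>v (Klam *\<^sub>v x + blam) = 0\<^sub>v p"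
  shows "\<forall>x \<in> carrier_vec n.
    ((row_sub G I * Keps - row_sub S I) @\<^sub>r (- Klam)) *\<^sub>v x \<le> (vec_sub W I - row_sub G I *\<^sub>v beps) @\<^sub>v blam \<longrightarrow>
    x \<in> feasible_states G W S \<and> eps_star Hh c G W S x = Keps *\<^sub>v x + beps \<and>
    (\<exists>lam. lagrange_multipliers Hh c G W S x (eps_star Hh c G W S x) lam \<and>
      vec_sub lam A = Klam *\<^sub>v x + blam \<and> vec_sub lam I = 0\<^sub>v (card I))"
proof (intro ballI impI)
  fix x assume x: "x \<in> carrier_vec n"
    and region: "((row_sub G I * Keps - row_sub S I) @\<^sub>r (- Klam)) *\<^sub>v x
      \<le> (vec_sub W I - row_sub G I *\<^sub>v beps) @\<^sub>v blam"
  define eps where "eps = Keps *\<^sub>v x + beps"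
  define la where "la = Klam *\<^sub>v x + blam"
  have eps: "eps \<in> carrier_vec p" and la: "la \<in> carrier_vec (card A)"
    unfolding eps_def la_def using Keps beps Klam blam x by auto
  have GI: "row_sub G I \<in> carrier_mat (card I) p" and SI: "row_sub S I \<in> carrier_mat (card I) n"
    and WI: "vec_sub W I \<in> carrier_vec (card I)"
    using row_sub_carrier[OF G I] row_sub_carrier[OF S I] vec_sub_carrier[OF W I] .
  have "row_sub G I * Keps - row_sub S I \<in> carrier_mat (card I) n"
    and "vec_sub W I - row_sub G I *\<^sub>v beps \<in> carrier_vec (card I)"
    using GI SI WI Keps beps by auto
  note region_split = region[unfolded append_rows_le[OF this(1) uminus_carrier_mat[OF Klam] this(2) x]]
  have slack: "row_sub G I *\<^sub>v eps \<le> row_sub S I *\<^sub>v x + vec_sub W I"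
    and la_nonneg: "la \<ge> 0\<^sub>v (card A)"
    using region_split
    unfolding eps_def la_def affine_le_iff[OF GI Keps SI beps WI x] nonneg_affine_iff[OF Klam blam x]
    by blast+
  note kkt = kkt_from_active_set[OF G W S x eps A I cover la la_nonneg tight[OF x, folded eps_def]
      slack stat[OF x, folded eps_def la_def]]
  have opt: "qp_optimizer Hh c G W S x eps" by (rule qp_optimizer_if_kkt[OF Hh sym psd G c W S kkt])
  have feasible: "x \<in> feasible_states G W S"
    unfolding feasible_states_def using x S kkt(1) by auto
  have "eps_star Hh c G W S x = eps"
    unfolding eps_star_def using unique feasible opt by (auto intro: the1_equality)
  then show "x \<in> feasible_states G W S \<and> eps_star Hh c G W S x = Keps *\<^sub>v x + beps \<and>
    (\<exists>lam. lagrange_multipliers Hh c G W S x (eps_star Hh c G W S x) lam \<and>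
      vec_sub lam A = Klam *\<^sub>v x + blam \<and> vec_sub lam I = 0\<^sub>v (card I))"
    using feasible kkt(2) vec_sub_zero_extend[OF A la] vec_sub_zero_extend_disjoint[OF I disj]
    unfolding eps_def la_def by (intro conjI exI[of _ "zero_extend L A (Klam *\<^sub>v x + blam)"]) auto
qed

theorem lemma1:
  fixes m N l r n :: nat
    and H G S :: "real mat" and W :: "real vec"
    and x0 :: "real vec"
    and E J F :: "real mat"
  defines "p \<equiv> m * N + 1"
    and "Hh \<equiv> four_block_mat H (0\<^sub>m (m * N) 1) (0\<^sub>m 1 (m * N)) (0\<^sub>m 1 1)"
    and "c \<equiv> unit_vec (m * N + 1) (m * N)"
  assumes H: "H \<in> carrier_mat (m * N) (m * N)" "posdef_mat H"
    and G: "G \<in> carrier_mat (l + r) p"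
    and W: "W \<in> carrier_vec (l + r)"
    and S: "S \<in> carrier_mat (l + r) n"
    and gc_zero: "\<forall>i. l \<le> i \<and> i < l + r \<longrightarrow> G $$ (i, m * N) = 0"
    and unique: "\<forall>x \<in> feasible_states G W S. \<exists>!eps. qp_optimizer Hh c G W S x eps"
    and x0: "x0 \<in> feasible_states G W S"
    and rank: "vec_space.rank (card (active_set G W S x0 (eps_star Hh c G W S x0)))
                 (row_sub G (active_set G W S x0 (eps_star Hh c G W S x0)))
               = card (active_set G W S x0 (eps_star Hh c G W S x0))"
    and E: "E \<in> carrier_mat p (card (active_set G W S x0 (eps_star Hh c G W S x0)))"
    and J: "J \<in> carrier_mat p (p - card (active_set G W S x0 (eps_star Hh c G W S x0)))"
    and F: "F \<in> carrier_mat (card (active_set G W S x0 (eps_star Hh c G W S x0)))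
                             (card (active_set G W S x0 (eps_star Hh c G W S x0)))"
    and F_upper: "upper_triangular F"
    and EJ_orth: "transpose_mat (append_cols E J) * append_cols E J = 1\<^sub>m p"
    and QR: "transpose_mat (row_sub G (active_set G W S x0 (eps_star Hh c G W S x0)))
             = append_cols E J * (F @\<^sub>r 0\<^sub>m (p - card (active_set G W S x0 (eps_star Hh c G W S x0)))
                                           (card (active_set G W S x0 (eps_star Hh c G W S x0))))"
  shows
    "let A = active_set G W S x0 (eps_star Hh c G W S x0);
         I = inactive_set G W S x0 (eps_star Hh c G W S x0);
         GA = row_sub G A; SA = row_sub S A; WA = vec_sub W A;
         GI = row_sub G I; SI = row_sub S I; WI = vec_sub W I;
         Psi = the (mat_inverse (transpose_mat J * Hh * J));
         Theta = the (mat_inverse (GA * E));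
         Keps = E * Theta * SA - J * Psi * transpose_mat J * Hh * E * Theta * SA;
         beps = (E - J * Psi * transpose_mat J * Hh * E) * Theta *\<^sub>v WA - J * Psi * transpose_mat J *\<^sub>v c;
         Klam = - (transpose_mat Theta * transpose_mat E * (Hh * Keps));
         blam = - (transpose_mat Theta * transpose_mat E *\<^sub>v (Hh *\<^sub>v beps + c));
         T = (GI * Keps - SI) @\<^sub>r (- Klam);
         d = (WI - GI *\<^sub>v beps) @\<^sub>v blam
     in invertible_mat (transpose_mat J * Hh * J) \<and> invertible_mat (GA * E) \<and>
        (\<forall>x \<in> carrier_vec n. T *\<^sub>v x \<le> d \<longrightarrow>
            x \<in> feasible_states G W S \<and>
            eps_star Hh c G W S x = Keps *\<^sub>v x + beps \<and>
            (\<exists>lam. lagrange_multipliers Hh c G W S x (eps_star Hh c G W S x) lam \<and>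
                   vec_sub lam A = Klam *\<^sub>v x + blam \<and>
                   vec_sub lam I = 0\<^sub>v (card I)))"
proof -
  define L where "L = l + r"
  define eps0 where "eps0 = eps_star Hh c G W S x0"
  define A where "A = active_set G W S x0 eps0"
  define a where "a = card A"
  have G: "G \<in> carrier_mat L p" and W: "W \<in> carrier_vec L" and S: "S \<in> carrier_mat L n"
    using G W S unfolding L_def by auto
  have E: "E \<in> carrier_mat p a" and J: "J \<in> carrier_mat p (p - a)" and F: "F \<in> carrier_mat a a"
    and QR: "transpose_mat (row_sub G A) = append_cols E J * (F @\<^sub>r 0\<^sub>m (p - a) a)"
    and rank: "vec_space.rank a (row_sub G A) = a"
    using E J F QR rank unfolding a_def A_def eps0_def by auto
  note Hh = zero_pad_convex[OF H, folded Hh_def p_def]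
  have c: "c \<in> carrier_vec p" unfolding c_def p_def by simp
  have opt0: "qp_optimizer Hh c G W S x0 eps0"
    unfolding eps0_def eps_star_def by (rule theI') (use unique x0 in blast)
  then have "qp_feasible G W S x0 eps0" unfolding qp_optimizer_def by blast
  note part = active_inactive_partition[OF this G W S, folded A_def]
  note qr = qr_factor_identities[OF E J F EJ_orth QR]
  note Theta = qr_theta_identities[OF E J F EJ_orth QR rank]
  obtain i0 where "i0 \<in> A" "G $$ (i0, m * N) \<noteq> 0"
    using exists_active_epigraph_row[OF H G[unfolded p_def] W S opt0[unfolded Hh_def c_def]]
    unfolding A_def by blast
  note Psi = reduced_hessian_inverse[OF H G[unfolded p_def] part(1) this J[unfolded p_def a_def]
      qr(1,6)[unfolded p_def a_def], folded Hh_def p_def a_def]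
  note laws = explicit_laws_kkt_equalities[OF E J Hh(1) row_sub_carrier[OF G part(1), folded a_def]
      Theta(2) Psi(2) F row_sub_carrier[OF S part(1), folded a_def]
      vec_sub_carrier[OF W part(1), folded a_def] c _ Theta(3) qr(6) Psi(3) qr(2,3) Theta(4)
      refl refl refl refl]
  show ?thesis
    unfolding Let_def eps0_def[symmetric] A_def[symmetric]
    using E J Hh(1) Theta(1,2) Psi(1,2) row_sub_carrier[OF S part(1)] vec_sub_carrier[OF W part(1)] c
    by (intro conjI affine_laws_optimal_on_region[OF Hh(1,2,3) c G W S unique part _ _ _ _ laws])
      (auto simp: a_def intro!: mult_mat_vec_carrier add_carrier_vec minus_carrier_vec)
qed

end
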